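(* Let $T$ be a non-empty set and $U=(U(t))_{t\in T}$ a stochastic process whose marginals $U(t)$ are all uniform on $(0,1)$ (with $\inf_{t\in S}U(t)$ and $\sup_{t\in S}U(t)$ measurable for the subsets $S$ below). Suppose there exist a finite covering $T=\bigcup_{j=1}^NT_j$ and $\lambda>1$ such that for every $j=1,\ldots,N$, $$\liminf_{x\downarrow0}\mathbb{P}\Big[\sup_{t\in T_j}U(t)\le\lambda x\ \Big|\ \inf_{t\in T_j}U(t)\le x\Big]>0.$$ Then $\mathbb{P}[\inf_{t\in T}U(t)\le x]=O(x)$ as $x\downarrow0$. *)

theory Defs
  imports "HOL-Probability.Probability" "HOL-Library.Landau_Symbols"
begin

end

theory Submission
  imports Defs
begin

text \<open>Write \<open>m\<^sub>S = inf\<^sub>S U\<close> and \<open>M\<^sub>S = sup\<^sub>S U\<close>. If the conditional probability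
  \<open>P[M\<^sub>S \<le> \<lambda>x | m\<^sub>S \<le> x]\<close> stays above \<open>c > 0\<close>, then \<open>P[m\<^sub>S \<le> x] < P[M\<^sub>S \<le> \<lambda>x] / c\<close>,
  and \<open>P[M\<^sub>S \<le> \<lambda>x] \<le> P[U t \<le> \<lambda>x] = \<lambda>x\<close> for any single \<open>t \<in> S\<close> because the marginals
  are uniform. A union bound over the finitely many pieces \<open>T\<^sub>j\<close> of the covering then
  gives \<open>P[m\<^sub>T \<le> x] \<le> (\<Sum>\<^sub>j \<lambda>/c\<^sub>j) x\<close> for all small \<open>x > 0\<close>.\<close>

lemma measure_le_uniform_01:
  assumes "f \<in> borel_measurable M"
    and "distr M lborel f = uniform_measure lborel {0<..<(1::real)}"
    and "0 \<le> y"
  shows "measure M {\<omega>\<in>space M. f \<omega> \<le> y} \<le> y"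
proof -
  have "measure M {\<omega>\<in>space M. f \<omega> \<le> y} = measure (distr M lborel f) {..y}"
    using assms(1) by (subst measure_distr) (auto intro!: arg_cong[where f="measure M"])
  also have "\<dots> = measure lborel ({0<..<1} \<inter> {..y})"
    using assms(2) by simp
  also have "\<dots> \<le> measure lborel {0..y}"
    using assms(3) by (intro measure_mono_fmeasurable) (auto simp: fmeasurable_def)
  also have "\<dots> = y"
    using assms(3) by simp
  finally show ?thesis .
qed

lemma INF_UNION_le_iff_finite:
  fixes f :: "'i \<Rightarrow> 'b::complete_linorder"
  assumes "finite I" and "I \<noteq> {}"
  shows "(INF t\<in>(\<Union>j\<in>I. S j). f t) \<le> a \<longleftrightarrow> (\<exists>j\<in>I. (INF t\<in>S j. f t) \<le> a)"
proof -
  have "(INF t\<in>(\<Union>j\<in>I. S j). f t) = (INF j\<in>I. INF t\<in>S j. f t)"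
    by (rule order.antisym) (auto intro!: INF_greatest INF_lower2)
  also have "\<dots> = Min ((\<lambda>j. INF t\<in>S j. f t) ` I)"
    using assms by (simp add: cInf_eq_Min)
  finally show ?thesis
    using assms by (simp add: Min_le_iff)
qed

lemma (in finite_measure) measure_INF_UNION_le_sum:
  fixes U :: "'i \<Rightarrow> 'a \<Rightarrow> real"
  assumes "finite I" and "I \<noteq> {}"
    and "\<And>j. j \<in> I \<Longrightarrow> (\<lambda>\<omega>. INF t\<in>S j. ereal (U t \<omega>)) \<in> borel_measurable M"
  shows "measure M {\<omega>\<in>space M. (INF t\<in>(\<Union>j\<in>I. S j). ereal (U t \<omega>)) \<le> ereal x}
    \<le> (\<Sum>j\<in>I. measure M {\<omega>\<in>space M. (INF t\<in>S j. ereal (U t \<omega>)) \<le> ereal x})"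
proof -
  let ?D = "\<lambda>j. {\<omega>\<in>space M. (INF t\<in>S j. ereal (U t \<omega>)) \<le> ereal x}"
  have sets: "?D j \<in> sets M" if "j \<in> I" for j
    using assms(3)[OF that] by measurable
  have "{\<omega>\<in>space M. (INF t\<in>(\<Union>j\<in>I. S j). ereal (U t \<omega>)) \<le> ereal x} = (\<Union>j\<in>I. ?D j)"
    using assms(1,2) by (auto simp: INF_UNION_le_iff_finite)
  then have "measure M {\<omega>\<in>space M. (INF t\<in>(\<Union>j\<in>I. S j). ereal (U t \<omega>)) \<le> ereal x}
      = measure M (\<Union>j\<in>I. ?D j)"
    by simp
  also have "\<dots> \<le> (\<Sum>j\<in>I. measure M (?D j))"
    using assms(1) sets by (intro finite_measure_subadditive_finite) auto
  finally show ?thesis .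
qed

lemma ex_pos_eventually_less_of_Liminf_pos:
  assumes "Liminf F (\<lambda>x. ereal (f x)) > 0"
  obtains c :: real where "0 < c" and "eventually (\<lambda>x. c < f x) F"
proof -
  obtain z where z: "0 < ereal z" "ereal z < Liminf F (\<lambda>x. ereal (f x))"
    using assms ereal_dense2 by blast
  then show ?thesis
    using less_LiminfD[OF z(2)] that by auto
qed

lemma le_divide_of_ratio_gt:
  fixes p q a c :: real
  assumes "0 < c" and "0 \<le> q" and "c < p / q" and "p \<le> a"
  shows "q \<le> a / c"
proof -
  have "0 < q"
    using assms by (cases "q = 0") auto
  then have "c * q < p"
    using assms(3) by (simp add: field_simps)
  then show ?thesis
    using assms by (simp add: field_simps)
qed

lemma (in prob_space) measure_SUP_le_uniform_01:
  fixes U :: "'i \<Rightarrow> 'a \<Rightarrow> real"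
  assumes "\<And>t. t \<in> S \<Longrightarrow> U t \<in> borel_measurable M"
    and "\<And>t. t \<in> S \<Longrightarrow> distr M lborel (U t) = uniform_measure lborel {0<..<1}"
    and "0 \<le> y"
  shows "measure M {\<omega>\<in>space M. (SUP t\<in>S. ereal (U t \<omega>)) \<le> ereal y
                              \<and> (INF t\<in>S. ereal (U t \<omega>)) \<le> ereal x} \<le> y"
proof (cases "S = {}")
  case True
  then show ?thesis
    using assms(3) by (simp add: top_ereal_def)
next
  case False
  then obtain t0 where t0: "t0 \<in> S" by blast
  have "{\<omega>\<in>space M. (SUP t\<in>S. ereal (U t \<omega>)) \<le> ereal y \<and> (INF t\<in>S. ereal (U t \<omega>)) \<le> ereal x}
      \<subseteq> {\<omega>\<in>space M. U t0 \<omega> \<le> y}"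
    using t0 by (auto dest: order_trans[OF SUP_upper[of t0 S "\<lambda>t. ereal (U t _)"]])
  then have "measure M {\<omega>\<in>space M. (SUP t\<in>S. ereal (U t \<omega>)) \<le> ereal y
                              \<and> (INF t\<in>S. ereal (U t \<omega>)) \<le> ereal x}
      \<le> measure M {\<omega>\<in>space M. U t0 \<omega> \<le> y}"
    using assms(1)[OF t0] by (intro finite_measure_mono) measurable
  also have "\<dots> \<le> y"
    using t0 assms by (intro measure_le_uniform_01) auto
  finally show ?thesis .
qed

lemma (in prob_space) eventually_measure_INF_le_linear:
  fixes U :: "'i \<Rightarrow> 'a \<Rightarrow> real"
  assumes "\<And>t. t \<in> S \<Longrightarrow> U t \<in> borel_measurable M"
    and "\<And>t. t \<in> S \<Longrightarrow> distr M lborel (U t) = uniform_measure lborel {0<..<1}"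
    and "0 \<le> lam"
    and "Liminf (at_right 0) (\<lambda>x. ereal (
         measure M {\<omega>\<in>space M. (SUP t\<in>S. ereal (U t \<omega>)) \<le> ereal (lam * x)
                                 \<and> (INF t\<in>S. ereal (U t \<omega>)) \<le> ereal x}
         / measure M {\<omega>\<in>space M. (INF t\<in>S. ereal (U t \<omega>)) \<le> ereal x})) > 0"
  obtains c where "0 < c" and "eventually (\<lambda>x. 0 < x \<and>
      measure M {\<omega>\<in>space M. (INF t\<in>S. ereal (U t \<omega>)) \<le> ereal x} \<le> lam * x / c) (at_right 0)"
proof -
  obtain c where c: "0 < c" and ev: "eventually (\<lambda>x. c <
         measure M {\<omega>\<in>space M. (SUP t\<in>S. ereal (U t \<omega>)) \<le> ereal (lam * x)
                                 \<and> (INF t\<in>S. ereal (U t \<omega>)) \<le> ereal x}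
         / measure M {\<omega>\<in>space M. (INF t\<in>S. ereal (U t \<omega>)) \<le> ereal x}) (at_right 0)"
    using ex_pos_eventually_less_of_Liminf_pos[OF assms(4)] by blast
  have "eventually (\<lambda>x. 0 < x \<and>
      measure M {\<omega>\<in>space M. (INF t\<in>S. ereal (U t \<omega>)) \<le> ereal x} \<le> lam * x / c) (at_right 0)"
    using ev eventually_at_right_less[of 0]
  proof eventually_elim
    case (elim x)
    have "measure M {\<omega>\<in>space M. (SUP t\<in>S. ereal (U t \<omega>)) \<le> ereal (lam * x)
                               \<and> (INF t\<in>S. ereal (U t \<omega>)) \<le> ereal x} \<le> lam * x"
      using elim(2) assms(1-3) by (intro measure_SUP_le_uniform_01) auto
    then show ?case
      using c elim by (auto intro: le_divide_of_ratio_gt)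
  qed
  then show ?thesis
    using c that by blast
qed

theorem lemma1:
  fixes M :: "'a measure" and U :: "'i \<Rightarrow> 'a \<Rightarrow> real"
    and T :: "'i set" and Tj :: "nat \<Rightarrow> 'i set" and N :: nat and lam :: real
  assumes "prob_space M"
    and "T \<noteq> {}"
    and "\<And>t. t \<in> T \<Longrightarrow> U t \<in> borel_measurable M"
    and "\<And>t. t \<in> T \<Longrightarrow> distr M lborel (U t) = uniform_measure lborel {0<..<1}"
    and "T = (\<Union>j\<in>{1..N}. Tj j)"
    and "(\<lambda>\<omega>. INF t\<in>T. ereal (U t \<omega>)) \<in> borel_measurable M"
    and "\<And>j. j \<in> {1..N} \<Longrightarrow> (\<lambda>\<omega>. INF t\<in>Tj j. ereal (U t \<omega>)) \<in> borel_measurable M"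
    and "\<And>j. j \<in> {1..N} \<Longrightarrow> (\<lambda>\<omega>. SUP t\<in>Tj j. ereal (U t \<omega>)) \<in> borel_measurable M"
    and "lam > 1"
    and "\<And>j. j \<in> {1..N} \<Longrightarrow>
      Liminf (at_right 0) (\<lambda>x. ereal (
         measure M {\<omega>\<in>space M. (SUP t\<in>Tj j. ereal (U t \<omega>)) \<le> ereal (lam * x)
                                 \<and> (INF t\<in>Tj j. ereal (U t \<omega>)) \<le> ereal x}
         / measure M {\<omega>\<in>space M. (INF t\<in>Tj j. ereal (U t \<omega>)) \<le> ereal x})) > 0"
  shows "(\<lambda>x. measure M {\<omega>\<in>space M. (INF t\<in>T. ereal (U t \<omega>)) \<le> ereal x})
           \<in> O[at_right 0](\<lambda>x. x)"
proof -
  interpret prob_space M by fact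
  define P where "P j x = measure M {\<omega>\<in>space M. (INF t\<in>Tj j. ereal (U t \<omega>)) \<le> ereal x}" for j x
  have "\<exists>c>0. eventually (\<lambda>x. 0 < x \<and> P j x \<le> lam * x / c) (at_right 0)" if j: "j \<in> {1..N}" for j
  proof -
    have sub: "Tj j \<subseteq> T"
      using assms(5) j by auto
    obtain c where "0 < c" and "eventually (\<lambda>x. 0 < x \<and>
        measure M {\<omega>\<in>space M. (INF t\<in>Tj j. ereal (U t \<omega>)) \<le> ereal x} \<le> lam * x / c) (at_right 0)"
      by (rule eventually_measure_INF_le_linear[of "Tj j" U lam])
        (use sub assms(3,4,9) assms(10)[OF j] in auto)
    then show ?thesis
      unfolding P_def by blast
  qed
  then obtain c where c: "\<And>j. j \<in> {1..N} \<Longrightarrow>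
      0 < c j \<and> eventually (\<lambda>x. 0 < x \<and> P j x \<le> lam * x / c j) (at_right 0)"
    by metis
  have N: "{1..N} \<noteq> {}"
    using assms(2,5) by auto
  have "eventually (\<lambda>x. \<forall>j\<in>{1..N}. 0 < x \<and> P j x \<le> lam * x / c j) (at_right 0)"
    using c by (intro eventually_ball_finite) auto
  then show ?thesis
  proof (intro bigoI[where c = "\<Sum>j\<in>{1..N}. lam / c j"], elim eventually_mono)
    fix x assume x: "\<forall>j\<in>{1..N}. 0 < x \<and> P j x \<le> lam * x / c j"
    have "measure M {\<omega>\<in>space M. (INF t\<in>T. ereal (U t \<omega>)) \<le> ereal x} \<le> (\<Sum>j\<in>{1..N}. P j x)"
      unfolding P_def assms(5) using N assms(7) by (intro measure_INF_UNION_le_sum) auto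
    also have "\<dots> \<le> (\<Sum>j\<in>{1..N}. lam * x / c j)"
      using x by (intro sum_mono) auto
    also have "\<dots> = (\<Sum>j\<in>{1..N}. lam / c j) * norm x"
      using x N by (auto simp: sum_distrib_right)
    finally show "norm (measure M {\<omega>\<in>space M. (INF t\<in>T. ereal (U t \<omega>)) \<le> ereal x})
        \<le> (\<Sum>j\<in>{1..N}. lam / c j) * norm x"
      by simp
  qed
qed

end
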